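(* Every partition $\pi\in\mathcal P$ is first-order definable in $\mathbf Y^*=\langle\mathcal P,\le,[1]+[1]\rangle$, i.e. for each $\pi$ there is a first-order formula $\phi_\pi(x)$ in the language $\{\le,[1]+[1]\}$ satisfied in $\mathbf Y^*$ exactly by $\pi$. Consequently, the conjugation map $\pi\mapsto\pi^\partial$ is the unique nontrivial automorphism of Young's lattice $\mathbf Y=\langle\mathcal P,\le\rangle$.
   Context: $\mathcal P$ is the set of all integer partitions, including the empty partition $\emptyset$; a partition is a nonincreasing finite sequence $(n_1,\dots,n_t)$ of positive integers. $[1]+[1]$ denotes the partition $(1,1)$. Young's lattice is $\mathbf Y=\langle\mathcal P,\le\rangle$ where $(s_1,\dots,s_r)\le(n_1,\dots,n_t)$ iff $r\le t$ and $s_i\le n_i$ for all $i\le r$ (containment of Young diagrams). $\mathbf Y^*$ is $\mathbf Y$ expanded by a constant symbol interpreted as $(1,1)$. The conjugate $\pi^\partial$ of $\pi$ is the partition whose Young diagram is the transpose of that of $\pi$. *)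

theory Defs
  imports Main
begin

definition partitions :: "nat list set" where
  "partitions = {xs. sorted_wrt (\<ge>) xs \<and> (\<forall>x\<in>set xs. 0 < x)}"

definition young_le :: "nat list \<Rightarrow> nat list \<Rightarrow> bool" where
  "young_le s n \<longleftrightarrow> length s \<le> length n \<and> (\<forall>i<length s. s ! i \<le> n ! i)"

text \<open>The constant of Y*: the partition [1]+[1] = (1,1).\<close>

definition one_one :: "nat list" where
  "one_one = [1, 1]"

definition conjugate :: "nat list \<Rightarrow> nat list" where
  "conjugate p = map (\<lambda>j. length (filter (\<lambda>a. j < a) p)) [0..<(case p of [] \<Rightarrow> 0 | a # _ \<Rightarrow> a)]"

datatype trm = Var nat | Cst

datatype fm =
    FLe trm trm
  | FEq trm trm
  | FNeg fm
  | FConj fm fm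
  | FEx nat fm

fun trm_vars :: "trm \<Rightarrow> nat set" where
  "trm_vars (Var v) = {v}"
| "trm_vars Cst = {}"

fun free_vars :: "fm \<Rightarrow> nat set" where
  "free_vars (FLe s t) = trm_vars s \<union> trm_vars t"
| "free_vars (FEq s t) = trm_vars s \<union> trm_vars t"
| "free_vars (FNeg f) = free_vars f"
| "free_vars (FConj f g) = free_vars f \<union> free_vars g"
| "free_vars (FEx v f) = free_vars f - {v}"

fun trm_eval :: "(nat \<Rightarrow> nat list) \<Rightarrow> trm \<Rightarrow> nat list" where
  "trm_eval e (Var v) = e v"
| "trm_eval e Cst = one_one"

fun sat :: "(nat \<Rightarrow> nat list) \<Rightarrow> fm \<Rightarrow> bool" where
  "sat e (FLe s t) = young_le (trm_eval e s) (trm_eval e t)"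
| "sat e (FEq s t) = (trm_eval e s = trm_eval e t)"
| "sat e (FNeg f) = (\<not> sat e f)"
| "sat e (FConj f g) = (sat e f \<and> sat e g)"
| "sat e (FEx v f) = (\<exists>p\<in>partitions. sat (e(v := p)) f)"

definition young_aut :: "(nat list \<Rightarrow> nat list) \<Rightarrow> bool" where
  "young_aut f \<longleftrightarrow> bij_betw f partitions partitions \<and>
     (\<forall>x\<in>partitions. \<forall>y\<in>partitions. young_le x y \<longleftrightarrow> young_le (f x) (f y))"

end

(*
  Rows (n) and columns (1^n) are definable from the constant (1,1): the partitions with at most one
  part are those not above (1,1), and with the row (2) at hand, the columns are those not above (2);
  successive rows and columns are then obtained as least elements. A rectangle (b^a) is the largest
  partition lying above neither (b+1) nor (1^(a+1)), and (p_1,...,p_k) is the join of the rectangles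
  (p_i^i). So every partition is defined by a formula, and an automorphism fixing (1,1) preserves
  all formulas, hence is the identity. Without the constant, {(2),(1,1)} is still definable as the set
  of minimal partitions not below (1); so every automorphism f fixes (1,1), or maps it to (2), in
  which case conjugation after f fixes (1,1).
*)

theory Submission
  imports Defs "HOL-Library.More_List"
begin

section \<open>Young's lattice\<close>

lemma partitions_nth_antimono:
  "p \<in> partitions \<Longrightarrow> i \<le> j \<Longrightarrow> j < length p \<Longrightarrow> p ! j \<le> p ! i"
  unfolding partitions_def
  by (metis (mono_tags, lifting) le_eq_less_or_eq mem_Collect_eq order_refl sorted_wrt_nth_less)

lemma partitions_nth_pos: "p \<in> partitions \<Longrightarrow> i < length p \<Longrightarrow> 0 < p ! i"
  unfolding partitions_def by auto

lemma partitions_le_hd: "p \<in> partitions \<Longrightarrow> a \<in> set p \<Longrightarrow> a \<le> hd p"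
  by (cases p) (auto simp: partitions_def)

lemma Nil_in_partitions [simp]: "[] \<in> partitions"
  by (simp add: partitions_def)

lemma singleton_in_partitions [simp]: "[n] \<in> partitions \<longleftrightarrow> 0 < n"
  by (simp add: partitions_def)

lemma replicate_in_partitions: "0 < b \<Longrightarrow> replicate a b \<in> partitions"
  by (auto simp: partitions_def sorted_wrt_iff_nth_less)

lemma one_one_in_partitions: "one_one \<in> partitions"
  by (simp add: one_one_def partitions_def)

lemma snoc_in_partitionsD: "xs @ [x] \<in> partitions \<Longrightarrow> xs \<in> partitions \<and> 0 < x"
  by (auto simp: partitions_def sorted_wrt_append)

lemma young_le_refl: "young_le x x"
  by (simp add: young_le_def)

lemma young_le_antisym: "young_le x y \<Longrightarrow> young_le y x \<Longrightarrow> x = y"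
  unfolding young_le_def by (auto intro!: nth_equalityI intro: order.antisym)

lemma young_le_trans: "young_le x y \<Longrightarrow> young_le y z \<Longrightarrow> young_le x z"
  unfolding young_le_def by (meson le_trans less_le_trans)

lemma Nil_young_le [simp]: "young_le [] x"
  by (simp add: young_le_def)

lemma young_le_Nil_iff [simp]: "young_le x [] \<longleftrightarrow> x = []"
  by (auto simp: young_le_def)

lemma young_le_singleton_iff: "young_le x [n] \<longleftrightarrow> x = [] \<or> (\<exists>m. x = [m] \<and> m \<le> n)"
  by (cases x) (auto simp: young_le_def)

lemma singleton_young_le_iff: "young_le [n] x \<longleftrightarrow> x \<noteq> [] \<and> n \<le> hd x"
  by (cases x) (auto simp: young_le_def)

lemma young_le_replicate_iff:
  "young_le y (replicate a b) \<longleftrightarrow> length y \<le> a \<and> (\<forall>x\<in>set y. x \<le> b)"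
  by (auto simp: young_le_def all_set_conv_all_nth)

lemma replicate_one_young_le_iff:
  "y \<in> partitions \<Longrightarrow> young_le (replicate a 1) y \<longleftrightarrow> a \<le> length y"
  using partitions_nth_pos[of y] by (auto simp: young_le_def Suc_le_eq)

lemma not_one_one_young_le_iff:
  assumes "y \<in> partitions" shows "\<not> young_le one_one y \<longleftrightarrow> length y \<le> 1"
  using assms
  by (cases y rule: remdups_adj.cases) (auto simp: partitions_def young_le_def one_one_def less_Suc_eq)

lemma not_singleton_young_le_iff:
  assumes "y \<in> partitions" shows "\<not> young_le [n] y \<longleftrightarrow> (\<forall>x\<in>set y. x < n)"
  using partitions_le_hd[OF assms] by (cases y) (fastforce simp: singleton_young_le_iff)+

lemma not_young_le_one_iff:
  assumes "x \<in> partitions" shows "\<not> young_le x [1] \<longleftrightarrow> young_le [2] x \<or> young_le one_one x"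
  using assms
  by (cases x rule: remdups_adj.cases) (auto simp: partitions_def young_le_def one_one_def less_Suc_eq)

section \<open>Conjugation\<close>

lemma young_le_iff_nth_default:
  assumes "x \<in> partitions"
  shows "young_le x y \<longleftrightarrow> (\<forall>i. nth_default 0 x i \<le> nth_default 0 y i)"
proof
  assume "young_le x y"
  then show "\<forall>i. nth_default 0 x i \<le> nth_default 0 y i"
    by (auto simp: young_le_def nth_default_def)
next
  assume le: "\<forall>i. nth_default 0 x i \<le> nth_default 0 y i"
  have "length x \<le> length y"
  proof (rule ccontr)
    assume "\<not> length x \<le> length y"
    then have "0 < nth_default 0 x (length y)"
      using partitions_nth_pos[OF assms] by (simp add: nth_default_def)
    with le[rule_format, of "length y"] show False
      by (simp add: nth_default_beyond)
  qed
  with le show "young_le x y"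
    unfolding young_le_def by (metis nth_default_nth order_less_le_trans)
qed

lemma nth_default_antimono:
  "p \<in> partitions \<Longrightarrow> k \<le> k' \<Longrightarrow> nth_default 0 p k' \<le> nth_default 0 p k"
  using partitions_nth_antimono[of p k k'] by (auto simp: nth_default_def)

lemma finite_nth_default_greater: "finite {k. j < nth_default 0 (p :: nat list) k}"
  unfolding nth_default_def by (rule finite_subset[of _ "{..<length p}"]) (auto split: if_split_asm)

lemma less_card_nth_default_greater_iff:
  assumes p: "p \<in> partitions"
  shows "i < card {k. j < nth_default 0 p k} \<longleftrightarrow> j < nth_default 0 p i"
proof
  assume "j < nth_default 0 p i"
  then have "{..i} \<subseteq> {k. j < nth_default 0 p k}"
    using nth_default_antimono[OF p] by (auto intro: less_le_trans)
  then have "card {..i} \<le> card {k. j < nth_default 0 p k}"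
    by (rule card_mono[OF finite_nth_default_greater])
  then show "i < card {k. j < nth_default 0 p k}"
    by simp
next
  assume card: "i < card {k. j < nth_default 0 p k}"
  show "j < nth_default 0 p i"
  proof (rule ccontr)
    assume not_greater: "\<not> j < nth_default 0 p i"
    have "k < i" if "j < nth_default 0 p k" for k
    proof (rule ccontr)
      assume "\<not> k < i"
      then have "nth_default 0 p k \<le> nth_default 0 p i"
        by (simp add: nth_default_antimono[OF p])
      with that not_greater show False
        by simp
    qed
    then have "card {k. j < nth_default 0 p k} \<le> card {..<i}"
      by (intro card_mono) auto
    with card show False
      by simp
  qed
qed

lemma nth_default_conjugate:
  assumes p: "p \<in> partitions"
  shows "nth_default 0 (conjugate p) j = card {i. j < nth_default 0 p i}"
proof -
  have count: "length (filter (\<lambda>a. j < a) p) = card {i. j < nth_default 0 p i}"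
    unfolding length_filter_conv_card
    by (rule arg_cong[where f = card]) (auto simp: nth_default_def split: if_splits)
  show ?thesis
  proof (cases p)
    case (Cons a l)
    show ?thesis
    proof (cases "j < a")
      case False
      then have "filter (\<lambda>a. j < a) p = []"
        using partitions_le_hd[OF p] Cons by (fastforce simp: filter_empty_conv)
      with False Cons count show ?thesis by (simp add: conjugate_def nth_default_def)
    qed (use Cons count in \<open>simp add: conjugate_def nth_default_def\<close>)
  qed (simp add: conjugate_def)
qed

lemma conjugate_in_partitions:
  assumes p: "p \<in> partitions" shows "conjugate p \<in> partitions"
proof -
  have "length (filter (\<lambda>a. j' < a) p) \<le> length (filter (\<lambda>a. j < a) p)" if "j \<le> j'" for j j'
    using that by (induction p) auto
  then have "sorted_wrt (\<ge>) (conjugate p)"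
    by (auto simp: conjugate_def sorted_wrt_iff_nth_less)
  moreover have "\<forall>x\<in>set (conjugate p). 0 < x"
    by (cases p) (auto simp: conjugate_def filter_empty_conv)
  ultimately show ?thesis
    by (simp add: partitions_def)
qed

lemma conjugate_conjugate:
  assumes p: "p \<in> partitions" shows "conjugate (conjugate p) = p"
proof (rule young_le_antisym)
  have "nth_default 0 (conjugate (conjugate p)) i = nth_default 0 p i" for i
  proof -
    have "nth_default 0 (conjugate (conjugate p)) i = card {j. i < card {k. j < nth_default 0 p k}}"
      by (simp add: nth_default_conjugate conjugate_in_partitions p)
    also have "\<dots> = card {j. j < nth_default 0 p i}"
      by (simp add: less_card_nth_default_greater_iff[OF p])
    finally show ?thesis
      by simp
  qed
  then show "young_le (conjugate (conjugate p)) p" "young_le p (conjugate (conjugate p))"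
    by (simp_all add: young_le_iff_nth_default conjugate_in_partitions p)
qed

lemma conjugate_mono:
  assumes x: "x \<in> partitions" and y: "y \<in> partitions" and le: "young_le x y"
  shows "young_le (conjugate x) (conjugate y)"
proof -
  have "card {i. j < nth_default 0 x i} \<le> card {i. j < nth_default 0 y i}" for j
    using le x by (intro card_mono[OF finite_nth_default_greater])
      (auto simp: young_le_iff_nth_default intro: less_le_trans)
  then show ?thesis
    by (simp add: young_le_iff_nth_default nth_default_conjugate conjugate_in_partitions x y)
qed

lemma young_aut_conjugate: "young_aut conjugate"
  unfolding young_aut_def
proof (intro conjI ballI)
  show "bij_betw conjugate partitions partitions"
    by (rule bij_betw_byWitness[where f' = conjugate])
      (auto simp: conjugate_conjugate conjugate_in_partitions)
  fix x y assume "x \<in> partitions" "y \<in> partitions"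
  then show "young_le x y \<longleftrightarrow> young_le (conjugate x) (conjugate y)"
    using conjugate_mono[of x y] conjugate_mono[of "conjugate x" "conjugate y"]
    by (auto simp: conjugate_conjugate conjugate_in_partitions)
qed

section \<open>Definable sets of partitions\<close>

definition partition_env :: "(nat \<Rightarrow> nat list) \<Rightarrow> bool" where
  "partition_env e \<longleftrightarrow> (\<forall>v. e v \<in> partitions)"

definition fm_defines :: "fm \<Rightarrow> (nat list \<Rightarrow> bool) \<Rightarrow> bool" where
  "fm_defines \<phi> Q \<longleftrightarrow>
     free_vars \<phi> \<subseteq> {0} \<and> (\<forall>e. partition_env e \<longrightarrow> (sat e \<phi> \<longleftrightarrow> Q (e 0)))"

definition FAll :: "nat \<Rightarrow> fm \<Rightarrow> fm" where
  "FAll v \<phi> = FNeg (FEx v (FNeg \<phi>))"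

definition FImp :: "fm \<Rightarrow> fm \<Rightarrow> fm" where
  "FImp \<phi> \<psi> = FNeg (FConj \<phi> (FNeg \<psi>))"

lemma sat_FAll [simp]: "sat e (FAll v \<phi>) \<longleftrightarrow> (\<forall>p\<in>partitions. sat (e(v := p)) \<phi>)"
  by (simp add: FAll_def)

lemma sat_FImp [simp]: "sat e (FImp \<phi> \<psi>) \<longleftrightarrow> (sat e \<phi> \<longrightarrow> sat e \<psi>)"
  by (simp add: FImp_def)

lemma free_vars_FAll [simp]: "free_vars (FAll v \<phi>) = free_vars \<phi> - {v}"
  by (simp add: FAll_def)

lemma free_vars_FImp [simp]: "free_vars (FImp \<phi> \<psi>) = free_vars \<phi> \<union> free_vars \<psi>"
  by (simp add: FImp_def)

lemma partition_env_upd [simp]: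
  "partition_env e \<Longrightarrow> p \<in> partitions \<Longrightarrow> partition_env (e(v := p))"
  by (simp add: partition_env_def)

definition fm_at :: "nat \<Rightarrow> fm \<Rightarrow> fm" where
  "fm_at k \<phi> = FEx 0 (FConj (FEq (Var 0) (Var k)) \<phi>)"

lemma free_vars_fm_at: "free_vars \<phi> \<subseteq> {0} \<Longrightarrow> free_vars (fm_at k \<phi>) \<subseteq> {k}"
  by (auto simp: fm_at_def)

lemma free_vars_fm_defines: "fm_defines \<phi> Q \<Longrightarrow> free_vars \<phi> \<subseteq> {0}"
  by (simp add: fm_defines_def)

lemma sat_fm_defines: "fm_defines \<phi> Q \<Longrightarrow> partition_env e \<Longrightarrow> sat e \<phi> \<longleftrightarrow> Q (e 0)"
  by (simp add: fm_defines_def)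

lemma sat_fm_at:
  assumes "fm_defines \<phi> Q" "partition_env e" "k \<noteq> 0"
  shows "sat e (fm_at k \<phi>) \<longleftrightarrow> Q (e k)"
  using assms by (auto simp: fm_at_def fm_defines_def partition_env_def)

lemma fm_defines_cong:
  "fm_defines \<phi> Q \<Longrightarrow> (\<And>x. x \<in> partitions \<Longrightarrow> Q x \<longleftrightarrow> R x) \<Longrightarrow> fm_defines \<phi> R"
  by (auto simp: fm_defines_def partition_env_def)

lemma fm_defines_FNeg: "fm_defines \<phi> Q \<Longrightarrow> fm_defines (FNeg \<phi>) (\<lambda>x. \<not> Q x)"
  by (simp add: fm_defines_def)

lemma fm_defines_FConj:
  "fm_defines \<phi> Q \<Longrightarrow> fm_defines \<psi> R \<Longrightarrow> fm_defines (FConj \<phi> \<psi>) (\<lambda>x. Q x \<and> R x)"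
  by (simp add: fm_defines_def)

definition fm_above_one_one :: fm where
  "fm_above_one_one = FLe Cst (Var 0)"

lemma fm_defines_above_one_one: "fm_defines fm_above_one_one (young_le one_one)"
  by (simp add: fm_defines_def fm_above_one_one_def)

definition fm_below :: "fm \<Rightarrow> fm" where
  "fm_below \<phi> = FEx 1 (FConj (fm_at 1 \<phi>) (FLe (Var 0) (Var 1)))"

definition fm_above :: "fm \<Rightarrow> fm" where
  "fm_above \<phi> = FEx 1 (FConj (fm_at 1 \<phi>) (FLe (Var 1) (Var 0)))"

lemma fm_defines_below:
  assumes "fm_defines \<phi> (\<lambda>x. x = a)" "a \<in> partitions"
  shows "fm_defines (fm_below \<phi>) (\<lambda>x. young_le x a)"
  unfolding fm_defines_def[of "fm_below \<phi>"]
  using assms free_vars_fm_at[OF free_vars_fm_defines[OF assms(1)], of 1]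
  by (auto simp: fm_below_def sat_fm_at[OF assms(1)])

lemma fm_defines_above:
  assumes "fm_defines \<phi> (\<lambda>x. x = a)" "a \<in> partitions"
  shows "fm_defines (fm_above \<phi>) (young_le a)"
  unfolding fm_defines_def[of "fm_above \<phi>"]
  using assms free_vars_fm_at[OF free_vars_fm_defines[OF assms(1)], of 1]
  by (auto simp: fm_above_def sat_fm_at[OF assms(1)])

definition fm_least :: "fm \<Rightarrow> fm" where
  "fm_least \<phi> = FConj \<phi> (FAll 1 (FImp (fm_at 1 \<phi>) (FLe (Var 0) (Var 1))))"

definition fm_greatest :: "fm \<Rightarrow> fm" where
  "fm_greatest \<phi> = FConj \<phi> (FAll 1 (FImp (fm_at 1 \<phi>) (FLe (Var 1) (Var 0))))"

definition fm_minimal :: "fm \<Rightarrow> fm" where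
  "fm_minimal \<phi> =
     FConj \<phi> (FAll 1 (FImp (FConj (fm_at 1 \<phi>) (FLe (Var 1) (Var 0))) (FEq (Var 1) (Var 0))))"

lemma fm_defines_least:
  assumes "fm_defines \<phi> Q"
  shows "fm_defines (fm_least \<phi>) (\<lambda>x. Q x \<and> (\<forall>y\<in>partitions. Q y \<longrightarrow> young_le x y))"
  unfolding fm_defines_def[of "fm_least \<phi>"]
  using free_vars_fm_defines[OF assms] free_vars_fm_at[OF free_vars_fm_defines[OF assms], of 1]
  by (auto simp: fm_least_def
      sat_fm_at[OF assms] sat_fm_defines[OF assms])

lemma fm_defines_greatest:
  assumes "fm_defines \<phi> Q"
  shows "fm_defines (fm_greatest \<phi>) (\<lambda>x. Q x \<and> (\<forall>y\<in>partitions. Q y \<longrightarrow> young_le y x))"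
  unfolding fm_defines_def[of "fm_greatest \<phi>"]
  using free_vars_fm_defines[OF assms] free_vars_fm_at[OF free_vars_fm_defines[OF assms], of 1]
  by (auto simp: fm_greatest_def
      sat_fm_at[OF assms] sat_fm_defines[OF assms])

lemma fm_defines_minimal:
  assumes "fm_defines \<phi> Q"
  shows "fm_defines (fm_minimal \<phi>)
    (\<lambda>x. Q x \<and> (\<forall>y\<in>partitions. Q y \<and> young_le y x \<longrightarrow> y = x))"
  unfolding fm_defines_def[of "fm_minimal \<phi>"]
  using free_vars_fm_defines[OF assms] free_vars_fm_at[OF free_vars_fm_defines[OF assms], of 1]
  by (auto simp: fm_minimal_def
      sat_fm_at[OF assms] sat_fm_defines[OF assms])

lemma fm_defines_least_eq:
  assumes "fm_defines \<phi> Q" "a \<in> partitions" "Q a" "\<And>y. y \<in> partitions \<Longrightarrow> Q y \<Longrightarrow> young_le a y"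
  shows "fm_defines (fm_least \<phi>) (\<lambda>x. x = a)"
  using assms by (auto intro: young_le_antisym elim!: fm_defines_cong[OF fm_defines_least])

lemma fm_defines_greatest_eq:
  assumes "fm_defines \<phi> Q" "a \<in> partitions" "Q a" "\<And>y. y \<in> partitions \<Longrightarrow> Q y \<Longrightarrow> young_le y a"
  shows "fm_defines (fm_greatest \<phi>) (\<lambda>x. x = a)"
  using assms by (auto intro: young_le_antisym elim!: fm_defines_cong[OF fm_defines_greatest])

section \<open>Every partition is definable in Y*\<close>

definition fm_empty :: fm where
  "fm_empty = FAll 1 (FLe (Var 0) (Var 1))"

lemma fm_defines_empty: "fm_defines fm_empty (\<lambda>x. x = [])"
  by (auto simp: fm_defines_def fm_empty_def dest: bspec[of _ _ "[]"])

definition row_partition :: "nat \<Rightarrow> nat list" where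
  "row_partition n = (if n = 0 then [] else [n])"

lemma row_partition_in_partitions: "row_partition n \<in> partitions"
  by (simp add: row_partition_def)

fun fm_row :: "nat \<Rightarrow> fm" where
  "fm_row 0 = fm_empty"
| "fm_row (Suc n) = fm_least (FConj (FNeg fm_above_one_one) (FNeg (fm_below (fm_row n))))"

lemma fm_defines_row: "fm_defines (fm_row n) (\<lambda>x. x = row_partition n)"
proof (induction n)
  case 0
  show ?case
    using fm_defines_empty by (simp add: row_partition_def)
next
  case (Suc n)
  show ?case
    unfolding fm_row.simps
  proof (rule fm_defines_least_eq)
    show "fm_defines (FConj (FNeg fm_above_one_one) (FNeg (fm_below (fm_row n))))
        (\<lambda>y. \<not> young_le one_one y \<and> \<not> young_le y (row_partition n))"
      by (intro fm_defines_FConj fm_defines_FNeg fm_defines_above_one_one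
          fm_defines_below Suc.IH row_partition_in_partitions)
    fix y assume y: "y \<in> partitions" "\<not> young_le one_one y \<and> \<not> young_le y (row_partition n)"
    then have "length y \<le> 1" "y \<noteq> []"
      by (auto simp: not_one_one_young_le_iff)
    then obtain m where "y = [m]"
      by (cases y) auto
    with y show "young_le (row_partition (Suc n)) y"
      by (auto simp: row_partition_def young_le_singleton_iff split: if_splits)
  qed (auto simp: row_partition_def young_le_def one_one_def)
qed

fun fm_column :: "nat \<Rightarrow> fm" where
  "fm_column 0 = fm_empty"
| "fm_column (Suc n) = fm_least (FConj (FNeg (fm_above (fm_row 2))) (FNeg (fm_below (fm_column n))))"

lemma fm_defines_column: "fm_defines (fm_column n) (\<lambda>x. x = replicate n 1)"
proof (induction n)
  case 0
  show ?case
    using fm_defines_empty by simp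
next
  case (Suc n)
  have row_two: "fm_defines (fm_row 2) (\<lambda>x. x = [2])"
    using fm_defines_row[of 2] by (simp add: row_partition_def)
  show ?case
    unfolding fm_column.simps
  proof (rule fm_defines_least_eq)
    show "fm_defines (FConj (FNeg (fm_above (fm_row 2))) (FNeg (fm_below (fm_column n))))
        (\<lambda>y. \<not> young_le [2] y \<and> \<not> young_le y (replicate n 1))"
      by (intro fm_defines_FConj fm_defines_FNeg fm_defines_above fm_defines_below
          row_two Suc.IH replicate_in_partitions) simp_all
    fix y assume y: "y \<in> partitions" "\<not> young_le [2] y \<and> \<not> young_le y (replicate n 1)"
    then have "\<forall>x\<in>set y. x \<le> 1"
      by (auto simp: not_singleton_young_le_iff)
    with y have "n < length y"
      by (auto simp: young_le_replicate_iff)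
    then show "young_le (replicate (Suc n) 1) y"
      using replicate_one_young_le_iff[OF y(1), of "Suc n"] by simp
  qed (auto simp: replicate_in_partitions young_le_replicate_iff singleton_young_le_iff
      simp del: replicate.simps)
qed

definition fm_rectangle :: "nat \<Rightarrow> nat \<Rightarrow> fm" where
  "fm_rectangle a b =
     fm_greatest (FConj (FNeg (fm_above (fm_row (Suc b)))) (FNeg (fm_above (fm_column (Suc a)))))"

lemma fm_defines_rectangle:
  assumes "0 < b" shows "fm_defines (fm_rectangle a b) (\<lambda>x. x = replicate a b)"
  unfolding fm_rectangle_def
proof (rule fm_defines_greatest_eq)
  have row: "fm_defines (fm_row (Suc b)) (\<lambda>x. x = [Suc b])"
    using fm_defines_row[of "Suc b"] by (simp add: row_partition_def)
  show "fm_defines (FConj (FNeg (fm_above (fm_row (Suc b)))) (FNeg (fm_above (fm_column (Suc a)))))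
      (\<lambda>y. \<not> young_le [Suc b] y \<and> \<not> young_le (replicate (Suc a) 1) y)"
    by (intro fm_defines_FConj fm_defines_FNeg fm_defines_above row fm_defines_column
        replicate_in_partitions) simp_all
  show "replicate a b \<in> partitions"
    using assms by (rule replicate_in_partitions)
  have "\<not> young_le [Suc b] y \<and> \<not> young_le (replicate (Suc a) 1) y \<longleftrightarrow> young_le y (replicate a b)"
    if "y \<in> partitions" for y
    using replicate_one_young_le_iff[OF that, of "Suc a"]
    by (auto simp: not_singleton_young_le_iff[OF that] young_le_replicate_iff less_Suc_eq_le
        simp del: replicate.simps)
  then show "\<not> young_le [Suc b] (replicate a b) \<and> \<not> young_le (replicate (Suc a) 1) (replicate a b)"
    "\<And>y. y \<in> partitions \<Longrightarrow>
      \<not> young_le [Suc b] y \<and> \<not> young_le (replicate (Suc a) 1) y \<Longrightarrow> young_le y (replicate a b)"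
    by (auto simp: young_le_refl \<open>replicate a b \<in> partitions\<close> simp del: replicate.simps)
qed

definition fm_join :: "fm \<Rightarrow> fm \<Rightarrow> fm" where
  "fm_join \<phi> \<psi> = fm_least (FConj (fm_above \<phi>) (fm_above \<psi>))"

lemma snoc_young_le_iff:
  assumes "xs @ [x] \<in> partitions"
  shows "young_le (xs @ [x]) y \<longleftrightarrow> young_le xs y \<and> young_le (replicate (Suc (length xs)) x) y"
proof
  have "young_le xs (xs @ [x])"
    by (simp add: young_le_def nth_append)
  moreover have "young_le (replicate (Suc (length xs)) x) (xs @ [x])"
    using partitions_nth_antimono[OF assms, of _ "length xs"]
    by (auto simp: young_le_def nth_append less_Suc_eq_le simp del: replicate.simps)
  ultimately show "young_le (xs @ [x]) y \<Longrightarrow>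
      young_le xs y \<and> young_le (replicate (Suc (length xs)) x) y"
    by (blast intro: young_le_trans)
next
  assume "young_le xs y \<and> young_le (replicate (Suc (length xs)) x) y"
  then show "young_le (xs @ [x]) y"
    unfolding young_le_def
    by (auto simp: nth_append less_Suc_eq simp del: replicate.simps)
qed

text \<open>Indexed by the reversed partition, so that the recursion peels off the last (smallest) part.\<close>

fun fm_partition_rev :: "nat list \<Rightarrow> fm" where
  "fm_partition_rev [] = fm_empty"
| "fm_partition_rev (x # rs) = fm_join (fm_rectangle (Suc (length rs)) x) (fm_partition_rev rs)"

lemma fm_defines_partition:
  "p \<in> partitions \<Longrightarrow> fm_defines (fm_partition_rev (rev p)) (\<lambda>x. x = p)"
proof (induction p rule: rev_induct)
  case Nil
  show ?case
    by (simp add: fm_defines_empty)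
next
  case (snoc x xs)
  then have xs: "xs \<in> partitions" and x: "0 < x"
    by (simp_all add: snoc_in_partitionsD)
  have rev: "rev (xs @ [x]) = x # rev xs"
    by simp
  show ?case
    unfolding rev fm_partition_rev.simps length_rev fm_join_def
  proof (rule fm_defines_least_eq)
    show "fm_defines
        (FConj (fm_above (fm_rectangle (Suc (length xs)) x)) (fm_above (fm_partition_rev (rev xs))))
        (\<lambda>y. young_le (replicate (Suc (length xs)) x) y \<and> young_le xs y)"
      by (intro fm_defines_FConj fm_defines_above fm_defines_rectangle snoc.IH
          replicate_in_partitions x xs)
  qed (use snoc.prems snoc_young_le_iff[OF snoc.prems] young_le_refl in auto)
qed

section \<open>Automorphisms of Young's lattice\<close>

fun has_const :: "fm \<Rightarrow> bool" where
  "has_const (FLe s t) \<longleftrightarrow> s = Cst \<or> t = Cst"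
| "has_const (FEq s t) \<longleftrightarrow> s = Cst \<or> t = Cst"
| "has_const (FNeg \<phi>) \<longleftrightarrow> has_const \<phi>"
| "has_const (FConj \<phi> \<psi>) \<longleftrightarrow> has_const \<phi> \<or> has_const \<psi>"
| "has_const (FEx v \<phi>) \<longleftrightarrow> has_const \<phi>"

lemma young_aut_in_partitions: "young_aut f \<Longrightarrow> x \<in> partitions \<Longrightarrow> f x \<in> partitions"
  unfolding young_aut_def bij_betw_def by auto

lemma partition_env_comp: "young_aut f \<Longrightarrow> partition_env e \<Longrightarrow> partition_env (f \<circ> e)"
  by (simp add: partition_env_def young_aut_in_partitions)

lemma trm_eval_in_partitions: "partition_env e \<Longrightarrow> trm_eval e t \<in> partitions"
  by (cases t) (simp_all add: partition_env_def one_one_in_partitions)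

lemma trm_eval_comp:
  "(t = Cst \<Longrightarrow> f one_one = one_one) \<Longrightarrow> trm_eval (f \<circ> e) t = f (trm_eval e t)"
  by (cases t) auto

lemma young_aut_comp:
  assumes f: "young_aut f" and g: "young_aut g" shows "young_aut (g \<circ> f)"
  unfolding young_aut_def
proof (intro conjI ballI)
  show "bij_betw (g \<circ> f) partitions partitions"
    using f g unfolding young_aut_def by (blast intro: bij_betw_trans)
  fix x y assume "x \<in> partitions" "y \<in> partitions"
  then show "young_le x y \<longleftrightarrow> young_le ((g \<circ> f) x) ((g \<circ> f) y)"
    using f g young_aut_in_partitions[OF f] unfolding young_aut_def by simp
qed

lemma sat_comp_young_aut:
  assumes "young_aut f" "has_const \<phi> \<Longrightarrow> f one_one = one_one" "partition_env e"
  shows "sat (f \<circ> e) \<phi> \<longleftrightarrow> sat e \<phi>"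
  using assms(2,3)
proof (induction \<phi> arbitrary: e)
  case (FLe s t)
  have eval: "trm_eval (f \<circ> e) s = f (trm_eval e s)" "trm_eval (f \<circ> e) t = f (trm_eval e t)"
    by (rule trm_eval_comp, simp add: FLe.prems(1))+
  show ?case
    unfolding sat.simps eval
    using assms(1) trm_eval_in_partitions[OF FLe.prems(2)] by (simp add: young_aut_def)
next
  case (FEq s t)
  have eval: "trm_eval (f \<circ> e) s = f (trm_eval e s)" "trm_eval (f \<circ> e) t = f (trm_eval e t)"
    by (rule trm_eval_comp, simp add: FEq.prems(1))+
  have "inj_on f partitions"
    using assms(1) by (simp add: young_aut_def bij_betw_def)
  then show ?case
    unfolding sat.simps eval
    using trm_eval_in_partitions[OF FEq.prems(2)] by (auto dest: inj_onD)
next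
  case (FEx v \<phi>)
  have surj: "f ` partitions = partitions"
    using assms(1) by (simp add: young_aut_def bij_betw_def)
  have "sat (f \<circ> e) (FEx v \<phi>) \<longleftrightarrow> (\<exists>p\<in>f ` partitions. sat ((f \<circ> e)(v := p)) \<phi>)"
    by (simp add: surj)
  also have "\<dots> \<longleftrightarrow> (\<exists>q\<in>partitions. sat (f \<circ> e(v := q)) \<phi>)"
    by (simp add: fun_upd_comp)
  also have "\<dots> \<longleftrightarrow> sat e (FEx v \<phi>)"
  proof -
    have "sat (f \<circ> e(v := q)) \<phi> \<longleftrightarrow> sat (e(v := q)) \<phi>" if "q \<in> partitions" for q
      by (rule FEx.IH[OF _ partition_env_upd[OF FEx.prems(2) that]]) (simp add: FEx.prems(1))
    then show ?thesis
      by auto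
  qed
  finally show ?case .
qed simp_all

lemma young_aut_fixing_one_one_eq_id:
  assumes f: "young_aut f" and fixed: "f one_one = one_one" and x: "x \<in> partitions"
  shows "f x = x"
proof -
  let ?e = "\<lambda>_::nat. x"
  have env: "partition_env ?e"
    using x by (simp add: partition_env_def)
  note defines_x = fm_defines_partition[OF x]
  have "sat ?e (fm_partition_rev (rev x))"
    using sat_fm_defines[OF defines_x env] by simp
  then have "sat (f \<circ> ?e) (fm_partition_rev (rev x))"
    using sat_comp_young_aut[OF f fixed env] by simp
  then show "f x = x"
    using sat_fm_defines[OF defines_x partition_env_comp[OF f env]] by simp
qed

lemma minimal_above_antichain_iff:
  assumes "a \<in> partitions" "b \<in> partitions" "\<not> young_le a b" "\<not> young_le b a"
  shows "(young_le a x \<or> young_le b x) \<and>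
      (\<forall>y\<in>partitions. (young_le a y \<or> young_le b y) \<and> young_le y x \<longrightarrow> y = x)
    \<longleftrightarrow> x = a \<or> x = b"
  using assms by (blast intro: young_le_refl young_le_antisym young_le_trans)

definition fm_one_box :: fm where
  "fm_one_box = fm_least (FNeg (fm_below fm_empty))"

definition fm_two_boxes :: fm where
  "fm_two_boxes = fm_minimal (FNeg (fm_below fm_one_box))"

lemma fm_defines_one_box: "fm_defines fm_one_box (\<lambda>x. x = [1])"
  unfolding fm_one_box_def
proof (rule fm_defines_least_eq)
  show "fm_defines (FNeg (fm_below fm_empty)) (\<lambda>y. \<not> young_le y [])"
    by (intro fm_defines_FNeg fm_defines_below fm_defines_empty Nil_in_partitions)
  fix y assume "y \<in> partitions" "\<not> young_le y []"
  then show "young_le [1] y"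
    by (cases y) (auto simp: partitions_def singleton_young_le_iff)
qed simp_all

lemma fm_defines_two_boxes: "fm_defines fm_two_boxes (\<lambda>x. x = [2] \<or> x = one_one)"
  unfolding fm_two_boxes_def
proof (rule fm_defines_cong[OF fm_defines_minimal])
  show "fm_defines (FNeg (fm_below fm_one_box)) (\<lambda>y. \<not> young_le y [1])"
    by (intro fm_defines_FNeg fm_defines_below fm_defines_one_box) simp
  have antichain: "\<not> young_le [2] one_one" "\<not> young_le one_one [2]"
    by (simp_all add: young_le_def one_one_def)
  fix x assume "x \<in> partitions"
  then show "\<not> young_le x [1] \<and> (\<forall>y\<in>partitions. \<not> young_le y [1] \<and> young_le y x \<longrightarrow> y = x)
      \<longleftrightarrow> x = [2] \<or> x = one_one"
    using minimal_above_antichain_iff[OF _ one_one_in_partitions antichain, of x]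
      not_young_le_one_iff
    by simp
qed

lemma young_aut_one_one_cases:
  assumes f: "young_aut f" shows "f one_one = [2] \<or> f one_one = one_one"
proof -
  let ?e = "\<lambda>_::nat. one_one"
  have env: "partition_env ?e"
    by (simp add: partition_env_def one_one_in_partitions)
  have "\<not> has_const fm_two_boxes"
    by (simp add: fm_two_boxes_def fm_minimal_def fm_one_box_def fm_least_def fm_below_def
        fm_at_def fm_empty_def FAll_def FImp_def)
  then have "sat (f \<circ> ?e) fm_two_boxes \<longleftrightarrow> sat ?e fm_two_boxes"
    using sat_comp_young_aut[OF f _ env] by blast
  then show ?thesis
    using sat_fm_defines[OF fm_defines_two_boxes env]
      sat_fm_defines[OF fm_defines_two_boxes partition_env_comp[OF f env]]
    by simp
qed

lemma conjugate_two: "conjugate [2] = one_one"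
  by (simp add: conjugate_def one_one_def upt_rec)

theorem proposition3p3:
  shows "(\<forall>\<pi>\<in>partitions. \<exists>\<phi>. free_vars \<phi> \<subseteq> {0} \<and>
            (\<forall>e. (\<forall>v. e v \<in> partitions) \<longrightarrow> (sat e \<phi> \<longleftrightarrow> e 0 = \<pi>)))
       \<and> young_aut conjugate
       \<and> (\<exists>x\<in>partitions. conjugate x \<noteq> x)
       \<and> (\<forall>f. young_aut f \<longrightarrow> (\<forall>x\<in>partitions. f x = x) \<or> (\<forall>x\<in>partitions. f x = conjugate x))"
proof (intro conjI allI impI ballI)
  fix \<pi> assume "\<pi> \<in> partitions"
  then show "\<exists>\<phi>. free_vars \<phi> \<subseteq> {0} \<and> (\<forall>e. (\<forall>v. e v \<in> partitions) \<longrightarrow> (sat e \<phi> \<longleftrightarrow> e 0 = \<pi>))"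
    using fm_defines_partition unfolding fm_defines_def partition_env_def by blast
next
  show "young_aut conjugate"
    by (rule young_aut_conjugate)
next
  show "\<exists>x\<in>partitions. conjugate x \<noteq> x"
    using conjugate_two by (intro bexI[of _ "[2]"]) (simp_all add: one_one_def)
next
  fix f assume f: "young_aut f"
  show "(\<forall>x\<in>partitions. f x = x) \<or> (\<forall>x\<in>partitions. f x = conjugate x)"
    using young_aut_one_one_cases[OF f]
  proof
    assume "f one_one = [2]"
    then have "(conjugate \<circ> f) x = x" if "x \<in> partitions" for x
      using young_aut_fixing_one_one_eq_id[OF young_aut_comp[OF f young_aut_conjugate] _ that]
      by (simp add: conjugate_two)
    then have "\<forall>x\<in>partitions. f x = conjugate x"
      by (metis comp_apply conjugate_conjugate f young_aut_in_partitions)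
    then show ?thesis ..
  qed (use young_aut_fixing_one_one_eq_id[OF f] in blast)
qed

end
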